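(* Let $\mu$ be a strict partition with $\mu_2>0$ and $\mu_1-\mu_2=1$. Then the generating function $\sum_{n\ge0}|\mathrm{Av}_n(\mu)|z^n$ is not algebraic over $\mathbb Q(z)$.
   Context: A partition is a weakly decreasing sequence of nonnegative integers with finitely many nonzero parts, identified with its Ferrers board. $\alpha$ contains $\mu$ if one can delete some rows and some columns of the Ferrers board of $\alpha$ so that after top/left-justifying one obtains $\mu$; otherwise $\alpha$ avoids $\mu$. $\mathrm{Av}_n(\mu)$ is the set of partitions of weight $n$ avoiding $\mu$. Strict: positive parts distinct. *)

theory Defs
  imports "HOL-Computational_Algebra.Computational_Algebra"
begin

definition is_partition :: "nat list \<Rightarrow> bool" where
  "is_partition lam \<longleftrightarrow> sorted_wrt (\<ge>) lam \<and> (\<forall>x\<in>set lam. 0 < x)"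

definition is_strict_partition :: "nat list \<Rightarrow> bool" where
  "is_strict_partition lam \<longleftrightarrow> sorted_wrt (>) lam \<and> (\<forall>x\<in>set lam. 0 < x)"

text \<open>Ferrers board: cell (i,j) (row i, column j, 0-indexed) iff j < i-th part.\<close>
definition ferrers :: "nat list \<Rightarrow> (nat \<times> nat) set" where
  "ferrers lam = {(i, j). i < length lam \<and> j < lam ! i}"

text \<open>alpha contains mu: keep the rows in range f and columns in range g
  (f, g strictly increasing enumerations of the kept rows/columns) and delete
  all others; after top/left-justification the kept cells form the board of mu.\<close>
definition contains :: "nat list \<Rightarrow> nat list \<Rightarrow> bool" where
  "contains \<alpha> \<mu> \<longleftrightarrow> (\<exists>f g :: nat \<Rightarrow> nat. strict_mono f \<and> strict_mono g \<and>
      (\<forall>i j. (i, j) \<in> ferrers \<mu> \<longleftrightarrow> (f i, g j) \<in> ferrers \<alpha>))"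

definition Av :: "nat \<Rightarrow> nat list \<Rightarrow> nat list set" where
  "Av n \<mu> = {\<alpha>. is_partition \<alpha> \<and> sum_list \<alpha> = n \<and> \<not> contains \<alpha> \<mu>}"

definition Av_gf :: "nat list \<Rightarrow> rat fps" where
  "Av_gf \<mu> = Abs_fps (\<lambda>n. of_nat (card (Av n \<mu>)))"

text \<open>A formal power series F over Q is algebraic over Q(z) iff it is a root of a
  nonzero polynomial with coefficients in Q(z); after clearing denominators
  the coefficients may be taken in Q[z].\<close>
definition algebraic_over_rat_z :: "rat fps \<Rightarrow> bool" where
  "algebraic_over_rat_z F \<longleftrightarrow>
     (\<exists>P :: rat poly poly. P \<noteq> 0 \<and> poly (map_poly fps_of_poly P) F = 0)"

end

theory Submission
  imports Defs "HOL-Analysis.Analysis" "HOL-Real_Asymp.Real_Asymp"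
begin

text \<open>For a strict partition \<open>\<mu>\<close>, whether \<open>\<alpha>\<close> contains \<open>\<mu>\<close> depends only on the set of part sizes
  of \<open>\<alpha>\<close>, and when \<open>\<mu>\<^sub>1 = \<mu>\<^sub>2 + 1\<close> it does not change if the largest part size is replaced
  by any larger one. Consequently an avoider has fewer than \<open>\<mu>\<^sub>1\<close> distinct part sizes; let \<open>A\<close>
  be the maximal number. An avoider with \<open>A\<close> distinct part sizes and largest part \<open>M\<close> yields the avoiders with
  those sizes below \<open>M\<close> and an arbitrary largest part \<open>a > M\<close>, with arbitrary multiplicities.
  Summing geometric series, the generating function \<open>f\<close> satisfies, with \<open>t = 1 - x\<close>,
  \<open>c log (1/t) - C \<le> t\<^sup>A f(x) \<le> C' (1 + log (1/t))\<^sup>A\<close> as \<open>x \<rightarrow> 1\<^sup>-\<close>: \<open>h = t\<^sup>A f\<close> tends to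
  infinity, but \<open>t h\<^sup>n \<rightarrow> 0\<close> for every \<open>n\<close>. An algebraic relation \<open>\<Sum> q\<^sub>j(x) f\<^sup>j = 0\<close> becomes
  \<open>\<Sum> c\<^sub>j(x) t^(k\<^sub>j) h\<^sup>j = 0\<close> with \<open>c\<^sub>j(1) \<noteq> 0\<close>, and among the terms of least \<open>k\<^sub>j\<close> the one with the
  largest \<open>j\<close> dominates all others, which is absurd.\<close>

section \<open>Containment through the set of part sizes\<close>

text \<open>\<open>g\<close> enumerates the columns kept; row \<open>i\<close> of \<open>\<mu>\<close> is realised by a part of \<open>\<alpha>\<close> that covers
  exactly \<open>\<mu>\<^sub>i\<close> kept columns. Since the parts of a strict \<open>\<mu>\<close> are distinct, only the set
  \<open>S\<close> of part sizes of \<open>\<alpha>\<close> matters.\<close>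
definition contains_parts :: "nat list \<Rightarrow> nat set \<Rightarrow> bool" where
  "contains_parts \<mu> S \<longleftrightarrow>
     (\<exists>g. strict_mono g \<and> (\<forall>i<length \<mu>. \<exists>v\<in>S. g (\<mu>!i - 1) < v \<and> v \<le> g (\<mu>!i)))"

lemma contains_imp_contains_parts:
  assumes "is_strict_partition \<mu>" "contains \<alpha> \<mu>"
  shows "contains_parts \<mu> (set \<alpha>)"
proof -
  obtain f g where g: "strict_mono g"
    and fg: "\<And>i j. (i, j) \<in> ferrers \<mu> \<longleftrightarrow> (f i, g j) \<in> ferrers \<alpha>"
    using assms(2) unfolding contains_def by blast
  have "\<exists>v\<in>set \<alpha>. g (\<mu>!i - 1) < v \<and> v \<le> g (\<mu>!i)" if i: "i < length \<mu>" for i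
  proof -
    have "\<mu>!i > 0" using assms(1) i unfolding is_strict_partition_def by auto
    hence "(i, \<mu>!i - 1) \<in> ferrers \<mu>" using i by (auto simp: ferrers_def)
    hence in_row: "f i < length \<alpha> \<and> g (\<mu>!i - 1) < \<alpha>!(f i)" using fg by (auto simp: ferrers_def)
    have "(i, \<mu>!i) \<notin> ferrers \<mu>" by (auto simp: ferrers_def)
    hence "\<not> g (\<mu>!i) < \<alpha>!(f i)" using fg in_row by (auto simp: ferrers_def)
    thus ?thesis using in_row by (intro bexI[of _ "\<alpha>!(f i)"]) auto
  qed
  thus ?thesis using g unfolding contains_parts_def by blast
qed

lemma sorted_wrt_ge_obtain_strict_mono_index:
  fixes xs :: "'a::linorder list" and v :: "nat \<Rightarrow> 'a"
  assumes sorted: "sorted_wrt (\<ge>) xs"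
    and v_in: "\<And>i. i < n \<Longrightarrow> v i \<in> set xs"
    and v_dec: "\<And>i j. i < j \<Longrightarrow> j < n \<Longrightarrow> v j < v i"
  obtains f :: "nat \<Rightarrow> nat" where "strict_mono f" "\<And>i. i < n \<Longrightarrow> f i < length xs \<and> xs ! f i = v i"
    "\<And>i. n \<le> i \<Longrightarrow> length xs \<le> f i"
proof -
  define idx where "idx i = (SOME p. p < length xs \<and> xs!p = v i)" for i
  have idx: "idx i < length xs \<and> xs!(idx i) = v i" if "i < n" for i
    unfolding idx_def by (rule someI_ex) (use v_in[OF that] in \<open>auto simp: in_set_conv_nth\<close>)
  define f where "f i = (if i < n then idx i else length xs + i)" for i
  have "f i < f (Suc i)" for i
  proof (cases "Suc i < n")
    case True
    have "\<not> idx (Suc i) \<le> idx i"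
    proof
      assume "idx (Suc i) \<le> idx i"
      hence "xs!(idx i) \<le> xs!(idx (Suc i))"
      proof (cases "idx (Suc i) = idx i")
        case False
        hence "idx (Suc i) < idx i" using \<open>idx (Suc i) \<le> idx i\<close> by simp
        from sorted_wrt_nth_less[OF sorted this] show ?thesis using idx[of i] True by simp
      qed simp
      thus False using idx[of i] idx[of "Suc i"] v_dec[of i "Suc i"] True by simp
    qed
    thus ?thesis using True by (simp add: f_def)
  next
    case False
    thus ?thesis using idx[of i] by (auto simp: f_def)
  qed
  hence "strict_mono f" by (simp add: strict_mono_Suc_iff)
  thus ?thesis using that idx by (auto simp: f_def)
qed

lemma contains_parts_imp_contains:
  assumes mu: "is_strict_partition \<mu>" and al: "is_partition \<alpha>"
    and c: "contains_parts \<mu> (set \<alpha>)"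
  shows "contains \<alpha> \<mu>"
proof -
  obtain g where g: "strict_mono g"
    and "\<forall>i<length \<mu>. \<exists>v\<in>set \<alpha>. g (\<mu>!i - 1) < v \<and> v \<le> g (\<mu>!i)"
    using c unfolding contains_parts_def by blast
  then obtain v where v: "\<And>i. i < length \<mu> \<Longrightarrow> v i \<in> set \<alpha> \<and> g (\<mu>!i - 1) < v i \<and> v i \<le> g (\<mu>!i)"
    by metis
  have v_dec: "v j < v i" if "i < j" "j < length \<mu>" for i j
  proof -
    have "\<mu>!j < \<mu>!i" using mu that by (simp add: is_strict_partition_def sorted_wrt_iff_nth_less)
    hence "g (\<mu>!j) \<le> g (\<mu>!i - 1)" using g strict_mono_less_eq by fastforce
    thus ?thesis using v[of i] v[of j] that by force
  qed
  obtain f where f: "strict_mono f" and f_in: "\<And>i. i < length \<mu> \<Longrightarrow> f i < length \<alpha> \<and> \<alpha> ! f i = v i"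
    and f_out: "\<And>i. length \<mu> \<le> i \<Longrightarrow> length \<alpha> \<le> f i"
    using sorted_wrt_ge_obtain_strict_mono_index[of \<alpha> "length \<mu>" v] al v v_dec
    by (auto simp: is_partition_def)
  have "(i, j) \<in> ferrers \<mu> \<longleftrightarrow> (f i, g j) \<in> ferrers \<alpha>" for i j
  proof (cases "i < length \<mu>")
    case True
    have "j < \<mu>!i \<longleftrightarrow> g j < v i"
    proof
      assume "j < \<mu>!i"
      hence "g j \<le> g (\<mu>!i - 1)" using g strict_mono_less_eq by fastforce
      thus "g j < v i" using v[OF True] by simp
    next
      assume "g j < v i"
      hence "g j < g (\<mu>!i)" using v[OF True] by simp
      thus "j < \<mu>!i" using g strict_mono_less by blast
    qed
    thus ?thesis using True f_in[OF True] by (auto simp: ferrers_def)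
  next
    case False
    thus ?thesis using f_out[of i] by (auto simp: ferrers_def)
  qed
  thus ?thesis using f g unfolding contains_def by blast
qed

lemma contains_iff_contains_parts:
  assumes "is_strict_partition \<mu>" "is_partition \<alpha>"
  shows "contains \<alpha> \<mu> \<longleftrightarrow> contains_parts \<mu> (set \<alpha>)"
  using assms contains_imp_contains_parts contains_parts_imp_contains by blast

lemma strict_partition_nth_le_hd:
  assumes "is_strict_partition \<mu>" "i < length \<mu>"
  shows "\<mu>!i \<le> \<mu>!0"
  using assms by (cases i) (auto simp: is_strict_partition_def sorted_wrt_iff_nth_less intro: less_imp_le)

lemma strict_partition_nth_pos:
  assumes "is_strict_partition \<mu>" "i < length \<mu>"
  shows "0 < \<mu>!i"
  using assms by (auto simp: is_strict_partition_def)

lemma contains_parts_if_card_ge: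
  assumes mu: "is_strict_partition \<mu>" and ne: "\<mu> \<noteq> []"
    and fin: "finite S" and z: "0 \<notin> S" and c: "\<mu>!0 \<le> card S"
  shows "contains_parts \<mu> S"
proof -
  define xs where "xs = sorted_list_of_set S"
  define n where "n = card S"
  have n1: "1 \<le> n" using strict_partition_nth_pos[OF mu, of 0] ne c by (simp add: n_def)
  have lxs: "length xs = n" and sxs: "sorted_wrt (<) xs" and setxs: "set xs = S"
    using fin by (simp_all add: xs_def n_def)
  define g where "g j = (if j = 0 then 0 else if j \<le> n then xs!(j-1) else xs!(n-1) + j)" for j
  have gS: "g j \<in> S" if "1 \<le> j" "j \<le> n" for j
    using that lxs setxs by (auto simp: g_def)
  have "g j < g (Suc j)" for j
  proof -
    consider "j = 0" | "1 \<le> j" "Suc j \<le> n" | "n \<le> j" "1 \<le> j" by linarith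
    thus ?thesis
    proof cases
      case 1
      have "0 < g 1" using gS[of 1] n1 z by (cases "g 1") auto
      thus ?thesis using 1 by (simp add: g_def)
    next
      case 2
      thus ?thesis using sxs lxs by (simp add: g_def sorted_wrt_iff_nth_less)
    qed (auto simp: g_def)
  qed
  hence g: "strict_mono g" by (simp add: strict_mono_Suc_iff)
  have "\<exists>v\<in>S. g (\<mu>!i - 1) < v \<and> v \<le> g (\<mu>!i)" if i: "i < length \<mu>" for i
  proof -
    have "1 \<le> \<mu>!i" "\<mu>!i \<le> n"
      using strict_partition_nth_pos[OF mu i] strict_partition_nth_le_hd[OF mu i] c
      by (auto simp: n_def)
    moreover from this have "g (\<mu>!i - 1) < g (\<mu>!i)" using g by (simp add: strict_mono_def)
    ultimately show ?thesis using gS by blast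
  qed
  thus ?thesis using g unfolding contains_parts_def by blast
qed

text \<open>This is where \<open>\<mu>\<^sub>1 = \<mu>\<^sub>2 + 1\<close> enters: the window of row \<open>0\<close> is the single column just above
  the window of row \<open>1\<close>, so re-choosing the columns from there on lets any part size exceeding
  \<open>W\<close> realise row \<open>0\<close>.\<close>
lemma contains_parts_replace_max:
  assumes mu: "is_strict_partition \<mu>" and l2: "length \<mu> \<ge> 2" and m01: "\<mu>!0 = \<mu>!1 + 1"
    and Wa: "\<forall>w\<in>W. w < a" and Wb: "\<forall>w\<in>W. w < b"
    and c: "contains_parts \<mu> (insert a W)"
  shows "contains_parts \<mu> (insert b W)"
proof -
  obtain g where g: "strict_mono g"
    and gv: "\<forall>i<length \<mu>. \<exists>v\<in>insert a W. g (\<mu>!i - 1) < v \<and> v \<le> g (\<mu>!i)"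
    using c unfolding contains_parts_def by blast
  define m where "m = \<mu>!1"
  have m1: "1 \<le> m" using strict_partition_nth_pos[OF mu, of 1] l2 by (simp add: m_def)
  obtain v0 where v0: "v0 \<in> insert a W" "g m < v0"
    using gv[rule_format, of 0] l2 m01 by (auto simp: m_def simp flip: length_greater_0_conv)
  have below_v0: "v \<in> W" if "v \<in> insert a W" "v < v0" for v
    using that v0(1) Wa by auto
  obtain v1 where v1: "v1 \<in> insert a W" "g (m - 1) < v1" "v1 \<le> g m"
    using gv[rule_format, of 1] l2 by (auto simp: m_def)
  have v1W: "v1 \<in> W" using below_v0 v1 v0 by force
  have v1b: "v1 < b" using v1W Wb by auto
  define g' where "g' j = (if j < m then g j else if j = m then v1 else b + j)" for j
  have "g' j < g' (Suc j)" for j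
  proof -
    consider "Suc j < m" | "Suc j = m" | "j = m" | "m < j" by linarith
    thus ?thesis
    proof cases
      case 1 thus ?thesis using g by (simp add: g'_def strict_mono_def)
    next
      case 2 thus ?thesis using v1 by (auto simp: g'_def)
    qed (use v1b in \<open>simp_all add: g'_def\<close>)
  qed
  hence g': "strict_mono g'" by (simp add: strict_mono_Suc_iff)
  have "\<exists>v\<in>insert b W. g' (\<mu>!i - 1) < v \<and> v \<le> g' (\<mu>!i)" if i: "i < length \<mu>" for i
  proof -
    consider "i = 0" | "i = 1" | "2 \<le> i" by linarith
    thus ?thesis
    proof cases
      case 1
      thus ?thesis using m01 v1b by (intro bexI[of _ b]) (auto simp: g'_def m_def)
    next
      case 2
      thus ?thesis using v1W v1 m1 by (intro bexI[of _ v1]) (auto simp: g'_def m_def)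
    next
      case 3
      have lt: "\<mu>!i < m" using mu i 3 by (auto simp: m_def is_strict_partition_def sorted_wrt_iff_nth_less)
      obtain v where v: "v \<in> insert a W" "g (\<mu>!i - 1) < v" "v \<le> g (\<mu>!i)" using gv i by blast
      have "g (\<mu>!i) \<le> g m" using g lt by (simp add: strict_mono_less_eq)
      hence "v < v0" using v(3) v0(2) by linarith
      hence "v \<in> W" by (rule below_v0[OF v(1)])
      moreover have "g' (\<mu>!i - 1) = g (\<mu>!i - 1)" "g' (\<mu>!i) = g (\<mu>!i)" using lt by (auto simp: g'_def)
      ultimately show ?thesis using v by auto
    qed
  qed
  thus ?thesis using g' unfolding contains_parts_def by blast
qed

lemma not_contains_parts_singleton:
  assumes "length \<mu> \<ge> 2" and "\<mu>!0 = \<mu>!1 + 1"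
  shows "\<not> contains_parts \<mu> {a}"
proof
  assume "contains_parts \<mu> {a}"
  then obtain g where g: "\<forall>i<length \<mu>. g (\<mu>!i - 1) < a \<and> a \<le> g (\<mu>!i)"
    unfolding contains_parts_def by blast
  have "g (\<mu>!1) < a" using g[rule_format, of 0] assms by (simp flip: length_greater_0_conv)
  moreover have "a \<le> g (\<mu>!1)" using g[rule_format, of 1] assms by simp
  ultimately show False by simp
qed


section \<open>Partitions as lists of parts with multiplicities\<close>

lemma set_Cons_eq_image: "set_Cons A XS = (\<lambda>(x, xs). x # xs) ` (A \<times> XS)"
  by (auto simp: set_Cons_def)

lemma finite_listset: "\<forall>B\<in>set Bs. finite B \<Longrightarrow> finite (listset Bs)"
  by (induction Bs) (auto simp: set_Cons_eq_image)

lemma sum_prod_list_listset: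
  fixes \<phi> :: "'a \<Rightarrow> 'b::comm_semiring_1"
  assumes "\<forall>B\<in>set Bs. finite B"
  shows "(\<Sum>ps\<in>listset Bs. prod_list (map \<phi> ps)) = prod_list (map (sum \<phi>) Bs)"
  using assms
proof (induction Bs)
  case (Cons B Bs)
  have inj: "inj_on (\<lambda>(x, xs). x # xs) (B \<times> listset Bs)" by (auto simp: inj_on_def)
  have "(\<Sum>ps\<in>listset (B # Bs). prod_list (map \<phi> ps))
      = (\<Sum>(x, xs)\<in>B \<times> listset Bs. \<phi> x * prod_list (map \<phi> xs))"
    unfolding listset.simps set_Cons_eq_image sum.reindex[OF inj] by (simp add: split_def comp_def)
  also have "\<dots> = sum \<phi> B * (\<Sum>xs\<in>listset Bs. prod_list (map \<phi> xs))"
    by (simp only: sum.cartesian_product sum_product)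
  finally show ?case using Cons by simp
qed simp

lemma listset_replicate: "listset (replicate s B) = {ps. length ps = s \<and> set ps \<subseteq> B}"
proof (induction s)
  case (Suc s)
  show ?case
  proof (intro set_eqI iffI)
    fix ps assume "ps \<in> listset (replicate (Suc s) B)"
    thus "ps \<in> {ps. length ps = Suc s \<and> set ps \<subseteq> B}" using Suc by (auto simp: set_Cons_def)
  next
    fix ps assume "ps \<in> {ps. length ps = Suc s \<and> set ps \<subseteq> B}"
    thus "ps \<in> listset (replicate (Suc s) B)" using Suc by (cases ps) (auto simp: set_Cons_def)
  qed
qed auto

lemma listset_map_times:
  "qs \<in> listset (map (\<lambda>w. {w} \<times> B w) ws) \<Longrightarrow> map fst qs = ws \<and> (\<forall>p\<in>set qs. snd p \<in> B (fst p))"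
proof (induction ws arbitrary: qs)
  case (Cons w ws)
  then obtain p ps where "qs = p # ps" "p \<in> {w} \<times> B w" "ps \<in> listset (map (\<lambda>w. {w} \<times> B w) ws)"
    by (auto simp: set_Cons_def)
  thus ?case using Cons.IH by auto
qed simp

definition of_mults :: "(nat \<times> nat) list \<Rightarrow> nat list" where
  "of_mults ps = concat (map (\<lambda>(v, r). replicate r v) ps)"

lemma of_mults_Nil [simp]: "of_mults [] = []"
  by (simp add: of_mults_def)

lemma of_mults_Cons [simp]: "of_mults ((v, r) # ps) = replicate r v @ of_mults ps"
  by (simp add: of_mults_def)

definition strict_mults :: "(nat \<times> nat) list \<Rightarrow> bool" where
  "strict_mults ps \<longleftrightarrow> sorted_wrt (\<lambda>p q. fst q < fst p) ps \<and> (\<forall>p\<in>set ps. 1 \<le> snd p)"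

lemma power_sum_list_of_mults:
  fixes x :: "'a::comm_monoid_mult"
  shows "x ^ sum_list (of_mults ps) = prod_list (map (\<lambda>(v, r). x ^ (v * r)) ps)"
  by (induction ps) (auto simp: power_add sum_list_replicate mult.commute)

lemma set_of_mults: "\<forall>p\<in>set ps. 1 \<le> snd p \<Longrightarrow> set (of_mults ps) = fst ` set ps"
  by (induction ps) (fastforce simp: image_iff)+

lemma of_mults_exists:
  assumes "is_partition \<alpha>"
  shows "\<exists>ps. of_mults ps = \<alpha> \<and> length ps = card (set \<alpha>) \<and>
     (\<forall>p\<in>set ps. 1 \<le> fst p \<and> 1 \<le> snd p \<and> fst p * snd p \<le> sum_list \<alpha>) \<and>
     (\<alpha> \<noteq> [] \<longrightarrow> ps \<noteq> [] \<and> fst (hd ps) = hd \<alpha>)"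
  using assms
proof (induction \<alpha>)
  case (Cons v \<alpha>)
  have pos: "\<forall>x\<in>set (v # \<alpha>). 0 < x" using Cons.prems by (auto simp: is_partition_def)
  have "is_partition \<alpha>" using Cons.prems by (auto simp: is_partition_def)
  then obtain ps where ps: "of_mults ps = \<alpha>" "length ps = card (set \<alpha>)"
     "\<forall>p\<in>set ps. 1 \<le> fst p \<and> 1 \<le> snd p \<and> fst p * snd p \<le> sum_list \<alpha>"
     "\<alpha> \<noteq> [] \<longrightarrow> ps \<noteq> [] \<and> fst (hd ps) = hd \<alpha>"
    using Cons.IH by blast
  show ?case
  proof (cases "\<alpha> \<noteq> [] \<and> hd \<alpha> = v")
    case True
    then obtain r rest where ps_eq: "ps = (v, r) # rest" using ps(4) by (cases ps) auto
    have "v \<in> set \<alpha>" using True by (cases \<alpha>) auto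
    hence "of_mults ((v, Suc r) # rest) = v # \<alpha> \<and> length ((v, Suc r) # rest) = card (set (v # \<alpha>)) \<and>
      (\<forall>p\<in>set ((v, Suc r) # rest). 1 \<le> fst p \<and> 1 \<le> snd p \<and> fst p * snd p \<le> sum_list (v # \<alpha>))"
      using ps ps_eq pos by (auto simp: insert_absorb)
    thus ?thesis by fastforce
  next
    case False
    have "v \<notin> set \<alpha>"
    proof
      assume "v \<in> set \<alpha>"
      moreover obtain y ys where "\<alpha> = y # ys" using calculation by (cases \<alpha>) auto
      ultimately show False using Cons.prems False by (auto simp: is_partition_def)
    qed
    hence "of_mults ((v, 1) # ps) = v # \<alpha> \<and> length ((v, 1) # ps) = card (set (v # \<alpha>)) \<and>
      (\<forall>p\<in>set ((v, 1) # ps). 1 \<le> fst p \<and> 1 \<le> snd p \<and> fst p * snd p \<le> sum_list (v # \<alpha>))"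
      using ps pos by auto
    thus ?thesis by fastforce
  qed
qed simp

lemma of_mults_injective:
  "strict_mults ps \<Longrightarrow> strict_mults qs \<Longrightarrow> of_mults ps = of_mults qs \<Longrightarrow> ps = qs"
proof (induction ps arbitrary: qs)
  case Nil
  thus ?case by (cases qs) (auto simp: strict_mults_def)
next
  case (Cons p ps)
  obtain v r where p: "p = (v, r)" by (cases p)
  obtain u s qs' where q: "qs = (u, s) # qs'"
    using Cons.prems by (cases qs) (auto simp: strict_mults_def p)
  have rs: "1 \<le> r" "1 \<le> s" and tails: "strict_mults ps" "strict_mults qs'"
    using Cons.prems by (auto simp: strict_mults_def p q)
  have below_v: "\<forall>y\<in>set (of_mults ps). y < v"
    using Cons.prems(1) set_of_mults[of ps] tails by (auto simp: strict_mults_def p)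
  have below_u: "\<forall>y\<in>set (of_mults qs'). y < u"
    using Cons.prems(2) set_of_mults[of qs'] tails by (auto simp: strict_mults_def q)
  have eq: "replicate r v @ of_mults ps = replicate s u @ of_mults qs'"
    using Cons.prems(3) by (simp add: p q)
  have "u = v" using eq rs by (cases r; cases s) auto
  have "r = s"
  proof (rule ccontr)
    assume "r \<noteq> s"
    then consider "r < s" | "s < r" by linarith
    thus False
    proof cases
      case 1
      have "replicate s u = replicate r v @ replicate (s - r) v"
        using 1 \<open>u = v\<close> by (simp add: replicate_add[symmetric])
      hence "of_mults ps = replicate (s - r) v @ of_mults qs'" using eq by simp
      thus False using 1 below_v by (cases "s - r") auto
    next
      case 2
      have "replicate r v = replicate s u @ replicate (r - s) u"
        using 2 \<open>u = v\<close> by (simp add: replicate_add[symmetric])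
      hence "of_mults qs' = replicate (r - s) u @ of_mults ps" using eq by simp
      thus False using 2 below_u by (cases "r - s") auto
    qed
  qed
  thus ?case using Cons.IH tails eq p q \<open>u = v\<close> by simp
qed

lemma inj_on_of_mults: "inj_on of_mults {ps. strict_mults ps}"
  using of_mults_injective by (auto simp: inj_on_def)

lemma sorted_wrt_ge_replicate: "sorted_wrt (\<ge>) (replicate r (v::nat))"
  by (induction r) auto

lemma is_partition_of_mults:
  assumes "strict_mults ps" "\<forall>p\<in>set ps. 1 \<le> fst p"
  shows "is_partition (of_mults ps)"
  using assms
proof (induction ps)
  case Nil thus ?case by (simp add: is_partition_def)
next
  case (Cons p ps)
  obtain v r where p: "p = (v, r)" by (cases p)
  have tail: "strict_mults ps" using Cons.prems by (auto simp: strict_mults_def)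
  have "\<forall>y\<in>set (of_mults ps). y < v"
    using Cons.prems set_of_mults[of ps] tail by (auto simp: strict_mults_def p)
  thus ?case using Cons tail
    by (auto simp: is_partition_def p sorted_wrt_append sorted_wrt_ge_replicate intro: less_imp_le)
qed

lemma listset_largest_part_of_mults:
  assumes sorted_Ws: "sorted_wrt (>) Ws" and Ws_M: "\<forall>w\<in>set Ws. 1 \<le> w \<and> w < M"
    and ps_in: "ps \<in> listset (Sigma {M<..K} (\<lambda>a. {1..R a}) # map (\<lambda>w. {w} \<times> {1..R w}) Ws)"
  obtains a where "M < a" "strict_mults ps" "is_partition (of_mults ps)"
    "set (of_mults ps) = insert a (set Ws)"
proof -
  obtain p qs where ps_eq: "ps = p # qs" and p: "p \<in> Sigma {M<..K} (\<lambda>a. {1..R a})"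
    and qs: "qs \<in> listset (map (\<lambda>w. {w} \<times> {1..R w}) Ws)"
    using ps_in by (auto simp: set_Cons_def)
  obtain a r where ps: "ps = (a, r) # qs" "M < a" "1 \<le> r" using ps_eq p by (cases p) auto
  have fst_qs: "map fst qs = Ws" and snd_qs: "\<forall>p\<in>set qs. 1 \<le> snd p"
    using listset_map_times[OF qs] by auto
  have fst_set: "fst ` set qs = set Ws" using fst_qs by (metis list.set_map)
  have strict: "strict_mults ps"
  proof -
    have "sorted_wrt (>) (map fst qs)" using sorted_Ws fst_qs by simp
    hence "sorted_wrt (\<lambda>p q. fst q < fst p) qs" by (simp add: sorted_wrt_map)
    moreover have "\<forall>q\<in>set qs. fst q < a"
    proof
      fix q assume "q \<in> set qs"
      hence "fst q < M" using fst_set Ws_M by blast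
      thus "fst q < a" using ps(2) by simp
    qed
    ultimately show ?thesis using snd_qs ps(1,3) by (auto simp: strict_mults_def)
  qed
  moreover have "set (of_mults ps) = insert a (set Ws)"
    using set_of_mults[of ps] strict fst_set ps(1) by (auto simp: strict_mults_def)
  moreover have "is_partition (of_mults ps)"
    by (rule is_partition_of_mults[OF strict]) (use fst_set Ws_M ps in auto)
  ultimately show ?thesis using that ps(2) by blast
qed

section \<open>Counting avoiders\<close>

definition Av_upto :: "nat list \<Rightarrow> nat \<Rightarrow> nat list set" where
  "Av_upto \<mu> N = {\<alpha>. is_partition \<alpha> \<and> sum_list \<alpha> \<le> N \<and> \<not> contains \<alpha> \<mu>}"

definition max_distinct_parts :: "nat list \<Rightarrow> nat" where
  "max_distinct_parts \<mu> = Max {card (set \<alpha>) |\<alpha>. is_partition \<alpha> \<and> \<not> contains \<alpha> \<mu>}"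

lemma finite_partitions_sum_le: "finite {\<alpha>. is_partition \<alpha> \<and> sum_list \<alpha> \<le> N}"
proof (rule finite_subset)
  have "length xs \<le> sum_list xs" if "\<forall>x\<in>set xs. 0 < x" for xs :: "nat list"
    using that by (induction xs) auto
  thus "{\<alpha>. is_partition \<alpha> \<and> sum_list \<alpha> \<le> N} \<subseteq> {xs. set xs \<subseteq> {..N} \<and> length xs \<le> N}"
    using member_le_sum_list by (fastforce simp: is_partition_def)
  show "finite {xs. set xs \<subseteq> {..N} \<and> length xs \<le> N}" by (rule finite_lists_length_le) simp
qed

lemma finite_Av_upto: "finite (Av_upto \<mu> N)"
  by (rule finite_subset[OF _ finite_partitions_sum_le[of N]]) (auto simp: Av_upto_def)

lemma finite_Av: "finite (Av n \<mu>)"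
  by (rule finite_subset[OF _ finite_partitions_sum_le[of n]]) (auto simp: Av_def)

lemma sum_Av_upto_eq_partial_sum:
  fixes x :: "'a::comm_semiring_1"
  shows "(\<Sum>\<alpha>\<in>Av_upto \<mu> N. x ^ sum_list \<alpha>) = (\<Sum>n\<le>N. of_nat (card (Av n \<mu>)) * x ^ n)"
proof -
  have "Av_upto \<mu> N = (\<Union>n\<in>{..N}. Av n \<mu>)" by (auto simp: Av_upto_def Av_def)
  hence "(\<Sum>\<alpha>\<in>Av_upto \<mu> N. x ^ sum_list \<alpha>) = (\<Sum>n\<le>N. \<Sum>\<alpha>\<in>Av n \<mu>. x ^ sum_list \<alpha>)"
    using finite_Av[of _ \<mu>] by (simp only:) (intro sum.UNION_disjoint, auto simp: Av_def)
  also have "\<dots> = (\<Sum>n\<le>N. of_nat (card (Av n \<mu>)) * x ^ n)"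
    by (intro sum.cong refl) (simp add: Av_def)
  finally show ?thesis .
qed

lemma sum_prod_listset_le_sum_Av_upto:
  fixes x :: real
  assumes x: "0 \<le> x" and fin: "\<forall>B\<in>set Bs. finite B"
    and avoid: "\<And>ps. ps \<in> listset Bs \<Longrightarrow>
       strict_mults ps \<and> is_partition (of_mults ps) \<and> \<not> contains (of_mults ps) \<mu>"
  obtains N where "prod_list (map (\<lambda>B. \<Sum>(v, r)\<in>B. x ^ (v * r)) Bs) \<le> (\<Sum>\<alpha>\<in>Av_upto \<mu> N. x ^ sum_list \<alpha>)"
proof
  define P where "P = listset Bs"
  define N where "N = (\<Sum>ps\<in>P. sum_list (of_mults ps))"
  have finP: "finite P" unfolding P_def using fin by (rule finite_listset)
  have "sum_list (of_mults ps) \<le> N" if "ps \<in> P" for ps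
    unfolding N_def by (rule member_le_sum[OF that]) (use finP in auto)
  hence image: "of_mults ` P \<subseteq> Av_upto \<mu> N" using avoid by (auto simp: P_def Av_upto_def)
  have inj: "inj_on of_mults P" by (rule inj_on_subset[OF inj_on_of_mults]) (use avoid P_def in auto)
  have "prod_list (map (\<lambda>B. \<Sum>(v, r)\<in>B. x ^ (v * r)) Bs) = (\<Sum>ps\<in>P. x ^ sum_list (of_mults ps))"
    using fin by (simp add: P_def power_sum_list_of_mults sum_prod_list_listset case_prod_unfold)
  also have "\<dots> = (\<Sum>\<alpha>\<in>of_mults ` P. x ^ sum_list \<alpha>)" by (simp add: sum.reindex[OF inj])
  also have "\<dots> \<le> (\<Sum>\<alpha>\<in>Av_upto \<mu> N. x ^ sum_list \<alpha>)"
    by (rule sum_mono2[OF finite_Av_upto image]) (use x in auto)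
  finally show "prod_list (map (\<lambda>B. \<Sum>(v, r)\<in>B. x ^ (v * r)) Bs) \<le> (\<Sum>\<alpha>\<in>Av_upto \<mu> N. x ^ sum_list \<alpha>)" .
qed


context
  fixes \<mu> :: "nat list"
  assumes mu: "is_strict_partition \<mu>" and l2: "length \<mu> \<ge> 2" and m01: "\<mu>!0 = \<mu>!1 + 1"
begin

lemma card_set_less_hd:
  assumes "is_partition \<alpha>" "\<not> contains \<alpha> \<mu>"
  shows "card (set \<alpha>) < \<mu>!0"
proof (rule ccontr)
  assume "\<not> card (set \<alpha>) < \<mu>!0"
  hence "contains_parts \<mu> (set \<alpha>)"
    using l2 assms(1) by (intro contains_parts_if_card_ge[OF mu]) (auto simp: is_partition_def)
  thus False using contains_parts_imp_contains[OF mu assms(1)] assms(2) by simp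
qed

lemma avoider_card_sets:
  defines "C \<equiv> {card (set \<alpha>) |\<alpha>. is_partition \<alpha> \<and> \<not> contains \<alpha> \<mu>}"
  shows "finite C" "1 \<in> C"
proof -
  show "finite C" by (rule finite_subset[of _ "{..\<mu>!0}"]) (auto simp: C_def dest: card_set_less_hd)
  have "\<not> contains [1] \<mu>"
    using contains_imp_contains_parts[OF mu] not_contains_parts_singleton[OF l2 m01, of 1] by force
  moreover have "is_partition [1]" by (simp add: is_partition_def)
  ultimately show "1 \<in> C" unfolding C_def by (intro CollectI exI[of _ "[1]"]) simp
qed

lemma card_set_le_max_distinct_parts:
  "is_partition \<alpha> \<Longrightarrow> \<not> contains \<alpha> \<mu> \<Longrightarrow> card (set \<alpha>) \<le> max_distinct_parts \<mu>"
  unfolding max_distinct_parts_def by (rule Max_ge[OF avoider_card_sets(1)]) blast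

lemma max_distinct_parts_attained:
  obtains \<alpha> where "is_partition \<alpha>" "\<not> contains \<alpha> \<mu>" "card (set \<alpha>) = max_distinct_parts \<mu>"
proof -
  have "max_distinct_parts \<mu> \<in> {card (set \<alpha>) |\<alpha>. is_partition \<alpha> \<and> \<not> contains \<alpha> \<mu>}"
    unfolding max_distinct_parts_def using avoider_card_sets by (intro Max_in) auto
  thus ?thesis using that by auto
qed

lemma max_distinct_parts_pos: "1 \<le> max_distinct_parts \<mu>"
  unfolding max_distinct_parts_def by (rule Max_ge[OF avoider_card_sets])

lemma sum_Av_upto_le:
  fixes x :: real
  assumes x: "0 \<le> x"
  shows "(\<Sum>\<alpha>\<in>Av_upto \<mu> N. x ^ sum_list \<alpha>)
    \<le> (\<Sum>s\<le>max_distinct_parts \<mu>. (\<Sum>(v, r)\<in>{1..N}\<times>{1..N}. x ^ (v * r)) ^ s)"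
proof -
  define B where "B = {1..N}\<times>{1..N}"
  define U where "U = (\<Union>s\<in>{..max_distinct_parts \<mu>}. listset (replicate s B))"
  have finB: "finite B" by (simp add: B_def)
  have finU: "finite U" unfolding U_def using finB by (auto intro!: finite_listset)
  have sub: "Av_upto \<mu> N \<subseteq> of_mults ` U"
  proof
    fix \<alpha> assume "\<alpha> \<in> Av_upto \<mu> N"
    hence p: "is_partition \<alpha>" and sN: "sum_list \<alpha> \<le> N" and nc: "\<not> contains \<alpha> \<mu>"
      by (auto simp: Av_upto_def)
    obtain ps where ps: "of_mults ps = \<alpha>" "length ps = card (set \<alpha>)"
      "\<forall>p\<in>set ps. 1 \<le> fst p \<and> 1 \<le> snd p \<and> fst p * snd p \<le> sum_list \<alpha>"
      using of_mults_exists[OF p] by blast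
    have "set ps \<subseteq> B"
    proof
      fix p assume "p \<in> set ps"
      hence h: "1 \<le> fst p" "1 \<le> snd p" "fst p * snd p \<le> N" using ps(3) sN by auto
      have "fst p * 1 \<le> fst p * snd p" by (rule mult_le_mono2) (use h in simp)
      moreover have "1 * snd p \<le> fst p * snd p" by (rule mult_le_mono1) (use h in simp)
      ultimately have "fst p \<le> N" "snd p \<le> N" using h by linarith+
      thus "p \<in> B" using h by (auto simp: B_def mem_Times_iff)
    qed
    moreover have "length ps \<le> max_distinct_parts \<mu>"
      using ps(2) card_set_le_max_distinct_parts[OF p nc] by simp
    ultimately have "ps \<in> U" by (auto simp: U_def listset_replicate)
    thus "\<alpha> \<in> of_mults ` U" using ps(1) by blast
  qed
  have "(\<Sum>\<alpha>\<in>Av_upto \<mu> N. x ^ sum_list \<alpha>) \<le> (\<Sum>\<alpha>\<in>of_mults ` U. x ^ sum_list \<alpha>)"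
    by (rule sum_mono2) (use finU sub x in auto)
  also have "\<dots> \<le> (\<Sum>ps\<in>U. x ^ sum_list (of_mults ps))"
    using sum_image_le[OF finU, of "\<lambda>\<alpha>. x ^ sum_list \<alpha>" of_mults] x by (simp add: comp_def)
  also have "\<dots> = (\<Sum>s\<le>max_distinct_parts \<mu>. \<Sum>ps\<in>listset (replicate s B). x ^ sum_list (of_mults ps))"
    unfolding U_def using finite_lists_length_eq[OF finB]
    by (intro sum.UNION_disjoint) (auto simp: listset_replicate conj_commute)
  also have "\<dots> = (\<Sum>s\<le>max_distinct_parts \<mu>. (\<Sum>(v, r)\<in>B. x ^ (v * r)) ^ s)"
    by (simp add: power_sum_list_of_mults sum_prod_list_listset finB prod_list_replicate case_prod_unfold)
  finally show ?thesis by (simp add: B_def)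
qed

lemma avoids_replace_max:
  assumes "is_partition \<alpha>" "\<not> contains \<alpha> \<mu>" "set \<alpha> = insert M W" "\<forall>w\<in>W. w < M"
    and "is_partition \<beta>" "set \<beta> = insert a W" "M < a"
  shows "\<not> contains \<beta> \<mu>"
proof
  assume "contains \<beta> \<mu>"
  hence "contains_parts \<mu> (insert a W)" using contains_imp_contains_parts[OF mu] assms(6) by metis
  hence "contains_parts \<mu> (insert M W)"
    by (rule contains_parts_replace_max[OF mu l2 m01, rotated 2]) (use assms(4,7) in auto)
  thus False using assms(1-3) contains_iff_contains_parts[OF mu] by simp
qed

text \<open>The avoiders used for the lower bound: the part sizes \<open>Ws\<close> below \<open>M\<close> of an avoider with
  the maximal number of distinct part sizes, together with a largest part \<open>a \<in> (M, K]\<close>, all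
  with arbitrary multiplicities.\<close>
lemma sum_Av_upto_ge_family:
  obtains M Ws where "\<forall>w\<in>set Ws. 1 \<le> w \<and> w < M" "length Ws + 1 = max_distinct_parts \<mu>"
    "\<And>(x::real) K R. 0 \<le> x \<Longrightarrow> \<exists>N.
       (\<Sum>(a, r)\<in>Sigma {M<..K} (\<lambda>a. {1..R a}). x ^ (a * r)) *
         prod_list (map (\<lambda>w. \<Sum>r\<in>{1..R w}. x ^ (w * r)) Ws) \<le> (\<Sum>\<alpha>\<in>Av_upto \<mu> N. x ^ sum_list \<alpha>)"
proof -
  obtain \<alpha> where \<alpha>: "is_partition \<alpha>" "\<not> contains \<alpha> \<mu>" "card (set \<alpha>) = max_distinct_parts \<mu>"
    using max_distinct_parts_attained by blast
  have "\<alpha> \<noteq> []" using \<alpha>(3) max_distinct_parts_pos by auto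
  define M where "M = hd \<alpha>"
  define Ws where "Ws = rev (sorted_list_of_set (set \<alpha> - {M}))"
  have set_Ws: "set Ws = set \<alpha> - {M}" and sorted_Ws: "sorted_wrt (>) Ws"
    by (simp_all add: Ws_def sorted_wrt_rev)
  have set_\<alpha>: "set \<alpha> = insert M (set Ws)" using \<open>\<alpha> \<noteq> []\<close> by (auto simp: set_Ws M_def)
  have "\<forall>y\<in>set \<alpha>. y \<le> M"
    using \<alpha>(1) \<open>\<alpha> \<noteq> []\<close> unfolding M_def is_partition_def by (cases \<alpha>) auto
  moreover have "\<forall>y\<in>set \<alpha>. 1 \<le> y" using \<alpha>(1) by (auto simp: is_partition_def Suc_le_eq)
  ultimately have Ws_M: "\<forall>w\<in>set Ws. 1 \<le> w \<and> w < M" by (force simp: set_Ws)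
  have "distinct Ws" "M \<notin> set Ws" by (simp_all add: Ws_def)
  hence len_Ws: "length Ws + 1 = max_distinct_parts \<mu>"
    using \<alpha>(3) set_\<alpha> distinct_card[of Ws] by simp
  have "\<exists>N. (\<Sum>(a, r)\<in>Sigma {M<..K} (\<lambda>a. {1..R a}). x ^ (a * r)) *
      prod_list (map (\<lambda>w. \<Sum>r\<in>{1..R w}. x ^ (w * r)) Ws) \<le> (\<Sum>\<alpha>\<in>Av_upto \<mu> N. x ^ sum_list \<alpha>)"
    if x: "0 \<le> x" for x :: real and K R
  proof -
    define Bs where "Bs = Sigma {M<..K} (\<lambda>a. {1..R a}) # map (\<lambda>w. {w} \<times> {1..R w}) Ws"
    have "strict_mults ps \<and> is_partition (of_mults ps) \<and> \<not> contains (of_mults ps) \<mu>"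
      if ps_in: "ps \<in> listset Bs" for ps
    proof -
      obtain a where a: "M < a" "strict_mults ps" "is_partition (of_mults ps)"
        "set (of_mults ps) = insert a (set Ws)"
        using listset_largest_part_of_mults[OF sorted_Ws Ws_M ps_in[unfolded Bs_def]] by blast
      thus ?thesis using avoids_replace_max[OF \<alpha>(1,2) set_\<alpha> _ a(3,4,1)] Ws_M by auto
    qed
    moreover have "\<forall>B\<in>set Bs. finite B" by (auto simp: Bs_def)
    ultimately obtain N where "prod_list (map (\<lambda>B. \<Sum>(v, r)\<in>B. x ^ (v * r)) Bs)
        \<le> (\<Sum>\<alpha>\<in>Av_upto \<mu> N. x ^ sum_list \<alpha>)"
      using sum_prod_listset_le_sum_Av_upto[OF x] by blast
    moreover have "(\<Sum>(v, r)\<in>{w} \<times> {1..R w}. x ^ (v * r)) = (\<Sum>r\<in>{1..R w}. x ^ (w * r))" for w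
      by (simp add: sum.cartesian_product[symmetric])
    ultimately show ?thesis by (auto simp: Bs_def comp_def)
  qed
  with Ws_M len_Ws show ?thesis using that by blast
qed

end


section \<open>Estimates for sums of \<open>(1 - t)\<^sup>v\<^sup>r\<close>\<close>

lemma sum_one_minus_power_ge:
  fixes t :: real and w :: nat
  assumes w: "1 \<le> w" and t: "0 < t" and wt: "4 * real w * t \<le> 1"
  shows "1 / (8 * w * t) \<le> (\<Sum>r\<in>{1..nat \<lfloor>1 / (2 * w * t)\<rfloor>}. (1 - t) ^ (w * r))"
proof -
  define R where "R = nat \<lfloor>1 / (2 * w * t)\<rfloor>"
  have wpos: "(0::real) < w" using w by simp
  have R_le: "real R \<le> 1 / (2 * w * t)" using t wpos by (simp add: R_def)
  have R_ge: "1 / (2 * w * t) - 1 \<le> real R" unfolding R_def by linarith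
  have "1 / 2 \<le> (1 - t) ^ (w * r)" if r: "r \<in> {1..R}" for r
  proof -
    have "t * 1 \<le> t * (4 * w)" using t w by (intro mult_left_mono) auto
    hence "t \<le> 1" using wt by (simp add: mult_ac)
    hence "1 + real (w * r) * (- t) \<le> (1 + - t) ^ (w * r)" by (intro Bernoulli_inequality) simp
    moreover have "real r \<le> 1 / (2 * w * t)" using r R_le by simp
    hence "real r * (2 * w * t) \<le> 1" using t wpos by (simp add: field_simps)
    hence "real (w * r) * t \<le> 1 / 2" by (simp add: field_simps)
    ultimately show ?thesis by simp
  qed
  hence "real R / 2 \<le> (\<Sum>r\<in>{1..R}. (1 - t) ^ (w * r))"
    using sum_mono[of "{1..R}" "\<lambda>_. 1 / 2 :: real"] by simp
  moreover have "1 / (8 * w * t) \<le> real R / 2"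
  proof -
    have "2 \<le> 1 / (2 * w * t)" using wt t wpos by (simp add: field_simps)
    hence "1 / (4 * w * t) \<le> 1 / (2 * w * t) - 1" by (simp add: field_simps)
    thus ?thesis using R_ge by (simp add: field_simps)
  qed
  ultimately show ?thesis by (simp only: R_def)
qed

lemma sum_one_minus_power_Sigma_ge:
  fixes t :: real and M :: nat
  assumes t: "0 < t" and MK: "M \<le> nat \<lfloor>1 / (4 * t)\<rfloor>"
  defines "K \<equiv> nat \<lfloor>1 / (4 * t)\<rfloor>"
  shows "(harm K - harm M) / (8 * t) \<le>
     (\<Sum>(a, r)\<in>Sigma {M<..K} (\<lambda>a. {1..nat \<lfloor>1 / (2 * a * t)\<rfloor>}). (1 - t) ^ (a * r))"
proof -
  have "(harm K - harm M :: real) = (\<Sum>a\<in>{M<..K}. 1 / real a)"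
  proof -
    have "{1..K} = {1..M} \<union> {M<..K}" using MK by (auto simp: K_def)
    thus ?thesis by (simp add: harm_def inverse_eq_divide sum.union_disjoint ivl_disj_int)
  qed
  hence "(harm K - harm M) / (8 * t) = (\<Sum>a\<in>{M<..K}. 1 / (8 * a * t))"
    by (simp add: sum_divide_distrib field_simps)
  also have "\<dots> \<le> (\<Sum>a\<in>{M<..K}. \<Sum>r\<in>{1..nat \<lfloor>1 / (2 * a * t)\<rfloor>}. (1 - t) ^ (a * r))"
  proof (rule sum_mono)
    fix a assume a: "a \<in> {M<..K}"
    have "real a \<le> real (nat \<lfloor>1 / (4 * t)\<rfloor>)" using a by (simp add: K_def)
    also have "\<dots> \<le> 1 / (4 * t)" using t by (simp add: of_nat_nat)
    finally have "real a \<le> 1 / (4 * t)" .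
    hence "4 * a * t \<le> 1" using t by (simp add: field_simps)
    thus "1 / (8 * a * t) \<le> (\<Sum>r\<in>{1..nat \<lfloor>1 / (2 * a * t)\<rfloor>}. (1 - t) ^ (a * r))"
      by (intro sum_one_minus_power_ge) (use a t in auto)
  qed
  also have "\<dots> = (\<Sum>(a, r)\<in>Sigma {M<..K} (\<lambda>a. {1..nat \<lfloor>1 / (2 * a * t)\<rfloor>}). (1 - t) ^ (a * r))"
    by (subst sum.Sigma) auto
  finally show ?thesis .
qed

lemma prod_list_sum_one_minus_power_ge:
  fixes t :: real
  assumes t: "0 < t" and Ws: "\<forall>w\<in>set Ws. 1 \<le> w \<and> 4 * real w * t \<le> 1"
  shows "prod_list (map (\<lambda>w. 1 / (8 * real w)) Ws) / t ^ length Ws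
    \<le> prod_list (map (\<lambda>w. \<Sum>r\<in>{1..nat \<lfloor>1 / (2 * w * t)\<rfloor>}. (1 - t) ^ (w * r)) Ws)"
  using Ws
proof (induction Ws)
  case (Cons w Ws)
  have "prod_list (map (\<lambda>w. 1 / (8 * real w)) (w # Ws)) / t ^ length (w # Ws)
     = 1 / (8 * w * t) * (prod_list (map (\<lambda>w. 1 / (8 * real w)) Ws) / t ^ length Ws)"
    by simp
  also have "\<dots> \<le> (\<Sum>r\<in>{1..nat \<lfloor>1 / (2 * w * t)\<rfloor>}. (1 - t) ^ (w * r)) *
      prod_list (map (\<lambda>w. \<Sum>r\<in>{1..nat \<lfloor>1 / (2 * w * t)\<rfloor>}. (1 - t) ^ (w * r)) Ws)"
  proof (rule mult_mono)
    show lower: "1 / (8 * w * t) \<le> (\<Sum>r\<in>{1..nat \<lfloor>1 / (2 * w * t)\<rfloor>}. (1 - t) ^ (w * r))"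
      using Cons.prems t by (intro sum_one_minus_power_ge) auto
    show "prod_list (map (\<lambda>w. 1 / (8 * real w)) Ws) / t ^ length Ws
      \<le> prod_list (map (\<lambda>w. \<Sum>r\<in>{1..nat \<lfloor>1 / (2 * w * t)\<rfloor>}. (1 - t) ^ (w * r)) Ws)"
      using Cons by simp
    show "0 \<le> (\<Sum>r\<in>{1..nat \<lfloor>1 / (2 * w * t)\<rfloor>}. (1 - t) ^ (w * r))"
      by (rule order_trans[OF _ lower]) (use t in simp)
    show "0 \<le> prod_list (map (\<lambda>w. 1 / (8 * real w)) Ws) / t ^ length Ws"
      using t by (auto intro!: divide_nonneg_nonneg prod_list_nonneg)
  qed
  finally show ?case by simp
qed simp

lemma sum_Sigma_mult_prod_list_ge:
  fixes t :: real
  assumes t: "0 < t" "4 * (real M + 1) * t \<le> 1" and Ws: "\<forall>w\<in>set Ws. 1 \<le> w \<and> w < M"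
  defines "K \<equiv> nat \<lfloor>1 / (4 * t)\<rfloor>" and "R \<equiv> \<lambda>a::nat. nat \<lfloor>1 / (2 * real a * t)\<rfloor>"
  shows "prod_list (map (\<lambda>w. 1 / (8 * real w)) Ws) / 8 * (ln (1 / (4 * t)) - harm M)
    \<le> (\<Sum>(a, r)\<in>Sigma {M<..K} (\<lambda>a. {1..R a}). (1 - t) ^ (a * r)) *
      prod_list (map (\<lambda>w. \<Sum>r\<in>{1..R w}. (1 - t) ^ (w * r)) Ws) * t ^ (length Ws + 1)"
proof -
  define P where "P = prod_list (map (\<lambda>w. 1 / (8 * real w)) Ws)"
  have "0 < P" unfolding P_def using Ws by (induction Ws) auto
  have "real M \<le> 1 / (4 * t)" using t by (simp add: field_simps)
  hence MK: "M \<le> K" unfolding K_def by (simp add: le_nat_floor le_floor_iff)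
  have "1 / (4 * t) \<le> real K + 1" unfolding K_def using t by linarith
  hence "ln (1 / (4 * t)) \<le> ln (real K + 1)" using t by (subst ln_le_cancel_iff) auto
  hence "P / 8 * (ln (1 / (4 * t)) - harm M) \<le> P / 8 * (harm K - harm M)"
    using ln_le_harm[of K] \<open>0 < P\<close> by (intro mult_left_mono) auto
  also have "\<dots> = (harm K - harm M) / (8 * t) * (P / t ^ length Ws) * t ^ (length Ws + 1)"
    using t by (simp add: field_simps)
  also have "\<dots> \<le> (\<Sum>(a, r)\<in>Sigma {M<..K} (\<lambda>a. {1..R a}). (1 - t) ^ (a * r)) *
      prod_list (map (\<lambda>w. \<Sum>r\<in>{1..R w}. (1 - t) ^ (w * r)) Ws) * t ^ (length Ws + 1)"
  proof (rule mult_right_mono[OF mult_mono])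
    show Sigma_ge: "(harm K - harm M) / (8 * t)
        \<le> (\<Sum>(a, r)\<in>Sigma {M<..K} (\<lambda>a. {1..R a}). (1 - t) ^ (a * r))"
      using sum_one_minus_power_Sigma_ge[OF t(1)] MK by (simp add: K_def R_def)
    have "\<forall>w\<in>set Ws. 1 \<le> w \<and> 4 * real w * t \<le> 1"
    proof
      fix w assume "w \<in> set Ws"
      hence "1 \<le> w" "real w \<le> real M + 1" using Ws by auto
      moreover from this have "4 * real w * t \<le> 4 * (real M + 1) * t"
        using t by (intro mult_right_mono mult_left_mono) auto
      ultimately show "1 \<le> w \<and> 4 * real w * t \<le> 1" using t by linarith
    qed
    thus "P / t ^ length Ws \<le> prod_list (map (\<lambda>w. \<Sum>r\<in>{1..R w}. (1 - t) ^ (w * r)) Ws)"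
      unfolding P_def R_def by (rule prod_list_sum_one_minus_power_ge[OF t(1)])
    show "0 \<le> (\<Sum>(a, r)\<in>Sigma {M<..K} (\<lambda>a. {1..R a}). (1 - t) ^ (a * r))"
      by (rule order_trans[OF _ Sigma_ge]) (use harm_mono[OF MK, where 'a=real] t in simp)
    show "0 \<le> P / t ^ length Ws" using \<open>0 < P\<close> t by simp
  qed (use t in simp)
  finally show ?thesis by (simp only: P_def)
qed

lemma sum_one_minus_power_le:
  fixes t :: real and v :: nat
  assumes v: "1 \<le> v" and t: "0 < t" "t < 1"
  shows "(\<Sum>r\<in>{1..N}. (1 - t) ^ (v * r)) \<le> 1 / (v * t)"
    and "(\<Sum>r\<in>{1..N}. (1 - t) ^ (v * r)) \<le> (1 - t) ^ v / t"
proof -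
  define y where "y = (1 - t) ^ v"
  have y0: "0 \<le> y" using t by (simp add: y_def)
  have y_le: "y \<le> 1 - t" using t v by (simp add: y_def power_decreasing[of 1 v "1 - t", simplified])
  have "(\<Sum>r\<in>{1..N}. (1 - t) ^ (v * r)) = y * (\<Sum>r<N. y ^ r)"
    by (simp add: y_def power_mult sum.atLeast1_atMost_eq sum_distrib_left)
  also have "\<dots> = y * ((1 - y ^ N) / (1 - y))" using y_le t by (simp add: sum_gp_strict)
  also have "\<dots> \<le> y / (1 - y)" using y0 y_le t by (simp add: divide_right_mono mult_left_le)
  finally have S: "(\<Sum>r\<in>{1..N}. (1 - t) ^ (v * r)) \<le> y / (1 - y)" .
  have "y * (1 + v * t) \<le> (1 - t) ^ v * (1 + t) ^ v"
    using Bernoulli_inequality[of t v] t y0 by (simp add: y_def mult_left_mono)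
  also have "\<dots> = (1 - t * t) ^ v" by (simp add: power_mult_distrib[symmetric] algebra_simps)
  also have "\<dots> \<le> 1" using t by (intro power_le_one) (auto simp: mult_le_one)
  finally have "y / (1 - y) \<le> 1 / (v * t)" using y_le y0 t v by (simp add: field_simps)
  thus "(\<Sum>r\<in>{1..N}. (1 - t) ^ (v * r)) \<le> 1 / (v * t)" using S by linarith
  have "y / (1 - y) \<le> y / t" using y0 y_le t by (intro divide_left_mono) auto
  thus "(\<Sum>r\<in>{1..N}. (1 - t) ^ (v * r)) \<le> (1 - t) ^ v / t" using S by (simp add: y_def)
qed

lemma one_minus_power_ceiling_sq_le:
  fixes t :: real
  assumes t: "0 < t" "t < 1"
  shows "(1 - t) ^ (nat \<lceil>1 / t\<rceil> ^ 2) \<le> t"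
proof -
  define c where "c = nat \<lceil>1 / t\<rceil>"
  have c: "1 / t \<le> real c" unfolding c_def by linarith
  have "(1 - t) ^ (c ^ 2) \<le> exp (- t) ^ (c ^ 2)"
    by (rule power_mono) (use exp_ge_add_one_self[of "- t"] t in auto)
  also have "\<dots> = exp (- t * real (c ^ 2))" by (simp add: exp_of_nat_mult[symmetric] mult.commute)
  also have "\<dots> \<le> exp (- (1 / t))"
  proof -
    have "(1 / t) * (1 / t) \<le> real c * real c" using c t by (intro mult_mono) auto
    hence "1 / t \<le> t * (real c * real c)" using t by (simp add: field_simps)
    thus ?thesis by (simp add: power2_eq_square)
  qed
  also have "\<dots> \<le> t"
  proof -
    have "1 \<le> t * exp (1 / t)" using exp_ge_add_one_self[of "1 / t"] t by (simp add: field_simps)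
    thus ?thesis using t by (simp add: exp_minus field_simps)
  qed
  finally show ?thesis by (simp add: c_def)
qed

lemma harm_ceiling_sq_le:
  fixes t :: real
  assumes t: "0 < t" "t < 1"
  shows "harm (nat \<lceil>1 / t\<rceil> ^ 2) + 1 \<le> 5 * (1 + ln (1 / t))"
proof -
  define K where "K = nat \<lceil>1 / t\<rceil> ^ 2"
  have K1: "1 \<le> K" using t unfolding K_def by (simp add: Suc_le_eq)
  have "(harm K :: real) \<le> 1 + ln (real K)"
    using euler_mascheroni_sequence_decreasing[of 1 K] K1 by (simp add: harm_def)
  also have "ln (real K) \<le> 2 + 2 * ln (1 / t)"
  proof -
    have "real (nat \<lceil>1 / t\<rceil>) \<le> 2 / t"
      using t ceiling_correct[of "1 / t"] by (simp add: field_simps)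
    hence "real K \<le> (2 / t) ^ 2" unfolding K_def by (simp add: power_mono)
    hence "ln (real K) \<le> ln ((2 / t) ^ 2)" using K1 by (subst ln_le_cancel_iff) auto
    also have "\<dots> = 2 * (ln 2 + ln (1 / t))" using t by (simp add: ln_realpow ln_div ln_mult)
    also have "\<dots> \<le> 2 + 2 * ln (1 / t)" using ln_2_less_1 by simp
    finally show ?thesis .
  qed
  finally have "(harm K :: real) \<le> 3 + 2 * ln (1 / t)" by simp
  moreover have "0 \<le> ln (1 / t)" using t by (intro ln_ge_zero) simp
  ultimately show ?thesis by (simp add: K_def algebra_simps)
qed

text \<open>Splitting at \<open>v = \<lceil>1/t\<rceil>\<^sup>2\<close>: below, the inner sums are at most \<open>1/(vt)\<close>, giving a
  harmonic number; above, they form a geometric tail of size at most \<open>1/t\<close>.\<close>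
lemma sum_one_minus_power_mult_le:
  fixes t :: real
  assumes t: "0 < t" "t < 1"
  shows "(\<Sum>(v, r)\<in>{1..N}\<times>{1..N}. (1 - t) ^ (v * r)) \<le> 5 * (1 + ln (1 / t)) / t"
proof -
  define K where "K = nat \<lceil>1 / t\<rceil> ^ 2"
  define g where "g v = (\<Sum>r\<in>{1..N}. (1 - t) ^ (v * r))" for v
  have "(\<Sum>(v, r)\<in>{1..N}\<times>{1..N}. (1 - t) ^ (v * r)) = (\<Sum>v\<in>{1..N}. g v)"
    by (simp add: g_def sum.cartesian_product)
  also have "\<dots> = (\<Sum>v\<in>{1..N} \<inter> {..K}. g v) + (\<Sum>v\<in>{1..N} \<inter> {K<..}. g v)"
  proof -
    have "{1..N} = ({1..N} \<inter> {..K}) \<union> ({1..N} \<inter> {K<..})" by auto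
    moreover have "({1..N} \<inter> {..K}) \<inter> ({1..N} \<inter> {K<..}) = {}" by auto
    ultimately show ?thesis by (metis finite_Int finite_atLeastAtMost sum.union_disjoint)
  qed
  also have "(\<Sum>v\<in>{1..N} \<inter> {..K}. g v) \<le> (\<Sum>v\<in>{1..K}. 1 / (v * t))"
  proof -
    have "(\<Sum>v\<in>{1..N} \<inter> {..K}. g v) \<le> (\<Sum>v\<in>{1..N} \<inter> {..K}. 1 / (v * t))"
      by (rule sum_mono) (use sum_one_minus_power_le(1)[OF _ t] in \<open>auto simp: g_def\<close>)
    also have "\<dots> \<le> (\<Sum>v\<in>{1..K}. 1 / (v * t))" by (rule sum_mono2) (use t in auto)
    finally show ?thesis .
  qed
  also have "(\<Sum>v\<in>{1..K}. 1 / (v * t)) = harm K / t"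
    by (simp add: harm_def sum_divide_distrib inverse_eq_divide)
  also have "(\<Sum>v\<in>{1..N} \<inter> {K<..}. g v) \<le> 1 / t"
  proof -
    have "(\<Sum>v\<in>{1..N} \<inter> {K<..}. g v) \<le> (\<Sum>v\<in>{Suc K..N}. (1 - t) ^ v) / t"
    proof -
      have "(\<Sum>v\<in>{1..N} \<inter> {K<..}. g v) \<le> (\<Sum>v\<in>{1..N} \<inter> {K<..}. (1 - t) ^ v / t)"
        by (rule sum_mono) (use sum_one_minus_power_le(2)[OF _ t] in \<open>auto simp: g_def\<close>)
      also have "\<dots> = (\<Sum>v\<in>{Suc K..N}. (1 - t) ^ v) / t"
        by (simp add: sum_divide_distrib) (rule sum.cong; auto)
      finally show ?thesis .
    qed
    also have "(\<Sum>v\<in>{Suc K..N}. (1 - t) ^ v) \<le> (1 - t) ^ Suc K / t"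
    proof (cases "N < Suc K")
      case False
      hence "(\<Sum>v\<in>{Suc K..N}. (1 - t) ^ v) = ((1 - t) ^ Suc K - (1 - t) ^ Suc N) / t"
        using t by (simp add: sum_gp)
      thus ?thesis using t by (simp add: divide_right_mono)
    qed (use t in simp)
    also have "(1 - t) ^ Suc K \<le> (1 - t) ^ K" using t by (intro power_decreasing) auto
    also have "\<dots> \<le> t" unfolding K_def by (rule one_minus_power_ceiling_sq_le[OF t])
    finally show ?thesis using t by (simp add: divide_right_mono)
  qed
  finally have S: "(\<Sum>(v, r)\<in>{1..N}\<times>{1..N}. (1 - t) ^ (v * r)) \<le> (harm K + 1) / t"
    by (simp add: add_divide_distrib)
  have "(harm K :: real) + 1 \<le> 5 * (1 + ln (1 / t))" unfolding K_def by (rule harm_ceiling_sq_le[OF t])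
  hence "(harm K + 1) / t \<le> 5 * (1 + ln (1 / t)) / t" using t by (simp add: divide_right_mono)
  thus ?thesis using S by linarith
qed

lemma tendsto_one_minus_mult_log_power:
  "((\<lambda>x::real. (1 - x) * (1 + ln (1 / (1 - x))) ^ k) \<longlongrightarrow> 0) (at_left 1)"
proof -
  define y where "y x = 1 + ln (1 / (1 - x))" for x :: real
  have "filterlim y at_top (at_left 1)" unfolding y_def by real_asymp
  hence "((\<lambda>x. exp 1 * (y x ^ k / exp (y x))) \<longlongrightarrow> exp 1 * 0) (at_left 1)"
    by (intro tendsto_mult tendsto_const filterlim_compose[OF tendsto_power_div_exp_0])
  moreover have "\<forall>\<^sub>F x in at_left 1. exp 1 * (y x ^ k / exp (y x)) = (1 - x) * (1 + ln (1 / (1 - x))) ^ k"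
  proof -
    have "\<forall>\<^sub>F x in at_left 1. x \<in> {0<..<1::real}" by (rule eventually_at_left_real) simp
    thus ?thesis by eventually_elim (simp add: y_def exp_add)
  qed
  ultimately show ?thesis by (simp add: tendsto_cong)
qed

lemma sum_power_div_mult_power_le:
  fixes t L :: real
  assumes t: "0 < t" "t \<le> 1" and L: "1 \<le> L"
  shows "(\<Sum>s\<le>A. (L / t) ^ s) * t ^ A \<le> real (A + 1) * L ^ A"
proof -
  have "(\<Sum>s\<le>A. (L / t) ^ s) * t ^ A = (\<Sum>s\<le>A. L ^ s * t ^ (A - s))"
    unfolding sum_distrib_right
  proof (intro sum.cong refl)
    fix s assume "s \<in> {..A}"
    hence "t ^ A = t ^ s * t ^ (A - s)" by (simp add: power_add[symmetric])
    thus "(L / t) ^ s * t ^ A = L ^ s * t ^ (A - s)" using t by (simp add: power_divide)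
  qed
  also have "\<dots> \<le> (\<Sum>s\<le>A. L ^ A)"
  proof (rule sum_mono)
    fix s assume "s \<in> {..A}"
    have "L ^ s * t ^ (A - s) \<le> L ^ s" using t L by (simp add: mult_left_le power_le_one)
    also have "\<dots> \<le> L ^ A" using L \<open>s \<in> {..A}\<close> by (simp add: power_increasing)
    finally show "L ^ s * t ^ (A - s) \<le> L ^ A" .
  qed
  finally show ?thesis by simp
qed


section \<open>Growth between all powers of the logarithm excludes algebraicity\<close>

lemma poly_eq_one_minus_power_mult:
  fixes p :: "real poly"
  assumes "p \<noteq> 0"
  obtains e r where "\<And>x. poly p x = (-1) ^ e * (1 - x) ^ e * poly r x" "poly r 1 \<noteq> 0"
proof -
  obtain r where r: "p = [:-1, 1:] ^ order 1 p * r" "\<not> [:-1, 1:] dvd r"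
    using order_decomp[OF assms, of 1] by blast
  have "poly p x = (-1) ^ order 1 p * (1 - x) ^ order 1 p * poly r x" for x
  proof -
    have "poly p x = (- (1 - x)) ^ order 1 p * poly r x" by (subst r(1)) (simp add: poly_power)
    also have "(- (1 - x)) ^ order 1 p = (-1) ^ order 1 p * (1 - x) ^ order 1 p" by (rule power_minus)
    finally show ?thesis by simp
  qed
  moreover have "poly r 1 \<noteq> 0" using r(2) by (simp add: poly_eq_0_iff_dvd)
  ultimately show ?thesis using that by blast
qed

lemma tendsto_one_minus_power_mult_power_ratio:
  fixes h c :: "real \<Rightarrow> real"
  assumes h: "filterlim h at_top (at_left 1)"
    and small: "\<And>n. ((\<lambda>x. (1 - x) * h x ^ n) \<longlongrightarrow> 0) (at_left 1)"
    and c: "(c \<longlongrightarrow> c1) (at_left 1)"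
    and km: "0 < k \<or> m < M"
  shows "((\<lambda>x. c x * (1 - x) ^ k * (h x ^ m / h x ^ M)) \<longlongrightarrow> 0) (at_left 1)"
proof -
  have h_pos: "\<forall>\<^sub>F x in at_left 1. 0 < h x" using h by (simp add: filterlim_at_top_dense)
  have t: "((\<lambda>x::real. 1 - x) \<longlongrightarrow> 0) (at_left 1)"
    using tendsto_diff[OF tendsto_const[of 1] tendsto_ident_at[of 1 "{..<1}"]] by simp
  consider "m < M" | "M \<le> m" "0 < k" using km by linarith
  thus ?thesis
  proof cases
    case 1
    have "((\<lambda>x. c x * (1 - x) ^ k / h x ^ (M - m)) \<longlongrightarrow> 0) (at_left 1)"
      using 1 by (intro tendsto_divide_0[OF tendsto_mult[OF c tendsto_power[OF t]]]
          filterlim_at_top_imp_at_infinity filterlim_pow_at_top[OF _ h]) simp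
    moreover have "\<forall>\<^sub>F x in at_left 1.
        c x * (1 - x) ^ k / h x ^ (M - m) = c x * (1 - x) ^ k * (h x ^ m / h x ^ M)"
      using h_pos by eventually_elim (use 1 in \<open>simp add: power_diff\<close>)
    ultimately show ?thesis by (rule Lim_transform_eventually)
  next
    case 2
    have "((\<lambda>x. c x * (1 - x) ^ (k - 1) * ((1 - x) * h x ^ (m - M))) \<longlongrightarrow> c1 * 0 ^ (k - 1) * 0) (at_left 1)"
      by (intro tendsto_mult c tendsto_power t small)
    moreover have "\<forall>\<^sub>F x in at_left 1.
        c x * (1 - x) ^ (k - 1) * ((1 - x) * h x ^ (m - M)) = c x * (1 - x) ^ k * (h x ^ m / h x ^ M)"
      using h_pos
    proof eventually_elim
      case (elim x)
      have "(1 - x) ^ k = (1 - x) ^ (k - 1) * (1 - x)" using 2 by (simp add: power_eq_if)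
      thus ?case using elim 2 by (simp add: power_diff)
    qed
    ultimately show ?thesis by (simp add: Lim_transform_eventually)
  qed
qed

text \<open>The term with least \<open>k\<^sub>j\<close> and, among those, largest \<open>j\<close> dominates all others.\<close>
lemma monomial_sum_not_eventually_zero:
  fixes c :: "nat \<Rightarrow> real \<Rightarrow> real" and k :: "nat \<Rightarrow> nat" and h :: "real \<Rightarrow> real"
  assumes S: "finite S" "S \<noteq> {}"
    and c: "\<And>j. j \<in> S \<Longrightarrow> (c j \<longlongrightarrow> l j) (at_left 1)" "\<And>j. j \<in> S \<Longrightarrow> l j \<noteq> 0"
    and h: "filterlim h at_top (at_left 1)"
    and small: "\<And>n. ((\<lambda>x. (1 - x) * h x ^ n) \<longlongrightarrow> 0) (at_left 1)"
  shows "\<not> (\<forall>\<^sub>F x in at_left 1. (\<Sum>j\<in>S. c j x * (1 - x) ^ k j * h x ^ j) = 0)"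
proof
  assume zero: "\<forall>\<^sub>F x in at_left 1. (\<Sum>j\<in>S. c j x * (1 - x) ^ k j * h x ^ j) = 0"
  define s where "s = Min (k ` S)"
  define J where "J = Max {j\<in>S. k j = s}"
  have s_le: "s \<le> k j" if "j \<in> S" for j using S that by (simp add: s_def)
  have "s \<in> k ` S" using S by (simp add: s_def)
  hence "{j\<in>S. k j = s} \<noteq> {}" by auto
  hence J: "J \<in> S" "k J = s" using Max_in[of "{j\<in>S. k j = s}"] S by (auto simp: J_def)
  have J_max: "j \<le> J" if "j \<in> S" "k j = s" for j using S that by (auto simp: J_def)
  define trm where "trm j x = c j x * (1 - x) ^ (k j - s) * (h x ^ j / h x ^ J)" for j x
  have h_pos: "\<forall>\<^sub>F x in at_left 1. 0 < h x" using h by (simp add: filterlim_at_top_dense)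
  have "\<forall>\<^sub>F x in at_left 1. c J x = trm J x"
    using h_pos by eventually_elim (simp add: trm_def J(2))
  hence "(trm J \<longlongrightarrow> l J) (at_left 1)" by (rule Lim_transform_eventually[OF c(1)[OF J(1)]])
  moreover have "(trm j \<longlongrightarrow> 0) (at_left 1)" if "j \<in> S" "j \<noteq> J" for j
    unfolding trm_def using h small c(1)[OF that(1)]
    by (rule tendsto_one_minus_power_mult_power_ratio)
      (use s_le[OF that(1)] J_max[OF that(1)] that(2) in fastforce)
  ultimately have "((\<lambda>x. trm J x + (\<Sum>j\<in>S - {J}. trm j x)) \<longlongrightarrow> l J + (\<Sum>j\<in>S - {J}. 0)) (at_left 1)"
    by (intro tendsto_add tendsto_sum) auto
  hence "((\<lambda>x. \<Sum>j\<in>S. trm j x) \<longlongrightarrow> l J) (at_left 1)"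
    using S J(1) by (simp add: sum.remove)
  moreover have "\<forall>\<^sub>F x in at_left 1. (\<Sum>j\<in>S. trm j x) = 0"
    using zero h_pos eventually_at_left_real[OF zero_less_one]
  proof eventually_elim
    case (elim x)
    have "(\<Sum>j\<in>S. trm j x) = (\<Sum>j\<in>S. c j x * (1 - x) ^ k j * h x ^ j) / ((1 - x) ^ s * h x ^ J)"
      unfolding sum_divide_distrib
    proof (rule sum.cong[OF refl])
      fix j assume "j \<in> S"
      hence "(1 - x) ^ k j = (1 - x) ^ s * (1 - x) ^ (k j - s)"
        using s_le by (simp flip: power_add)
      thus "trm j x = c j x * (1 - x) ^ k j * h x ^ j / ((1 - x) ^ s * h x ^ J)"
        using elim by (simp add: trm_def)
    qed
    thus ?case using elim by simp
  qed
  hence "((\<lambda>x. \<Sum>j\<in>S. trm j x) \<longlongrightarrow> 0) (at_left 1)" by (simp add: tendsto_eventually)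
  ultimately have "l J = 0" by (rule tendsto_unique[OF trivial_limit_at_left_real])
  thus False using c(2)[OF J(1)] by simp
qed

lemma poly_relation_not_eventually_zero:
  fixes q :: "nat \<Rightarrow> real poly" and f :: "real \<Rightarrow> real"
  assumes nz: "\<exists>j\<le>D. q j \<noteq> 0"
    and h: "filterlim (\<lambda>x. f x * (1 - x) ^ A) at_top (at_left 1)"
    and small: "\<And>n. ((\<lambda>x. (1 - x) * (f x * (1 - x) ^ A) ^ n) \<longlongrightarrow> 0) (at_left 1)"
  shows "\<not> (\<forall>\<^sub>F x in at_left 1. (\<Sum>j\<le>D. poly (q j) x * f x ^ j) = 0)"
proof
  assume zero: "\<forall>\<^sub>F x in at_left 1. (\<Sum>j\<le>D. poly (q j) x * f x ^ j) = 0"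
  define S where "S = {j. j \<le> D \<and> q j \<noteq> 0}"
  have "\<exists>e r. (\<forall>x. poly (q j) x = (-1) ^ e * (1 - x) ^ e * poly r x) \<and> poly r 1 \<noteq> 0"
    if "j \<in> S" for j
    using poly_eq_one_minus_power_mult[of "q j"] that by (metis (mono_tags, lifting) S_def mem_Collect_eq)
  then obtain e r where
    er: "\<And>j x. j \<in> S \<Longrightarrow> poly (q j) x = (-1) ^ e j * (1 - x) ^ e j * poly (r j) x"
      "\<And>j. j \<in> S \<Longrightarrow> poly (r j) 1 \<noteq> 0"
    by metis
  have "\<forall>\<^sub>F x in at_left 1. (\<Sum>j\<in>S. (-1) ^ e j * poly (r j) x * (1 - x) ^ (e j + (D - j) * A) *
      (f x * (1 - x) ^ A) ^ j) = 0"
    using zero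
  proof eventually_elim
    case (elim x)
    have "(\<Sum>j\<in>S. (-1) ^ e j * poly (r j) x * (1 - x) ^ (e j + (D - j) * A) * (f x * (1 - x) ^ A) ^ j)
        = (1 - x) ^ (D * A) * (\<Sum>j\<in>S. poly (q j) x * f x ^ j)"
      unfolding sum_distrib_left
    proof (rule sum.cong[OF refl])
      fix j assume "j \<in> S"
      hence "A * j + A * (D - j) = A * D"
        by (metis S_def add_mult_distrib2 le_add_diff_inverse mem_Collect_eq)
      hence "(1 - x) ^ (A * j) * (1 - x) ^ (A * (D - j)) = (1 - x) ^ (A * D)"
        by (simp flip: power_add)
      thus "(-1) ^ e j * poly (r j) x * (1 - x) ^ (e j + (D - j) * A) * (f x * (1 - x) ^ A) ^ j
          = (1 - x) ^ (D * A) * (poly (q j) x * f x ^ j)"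
        using er(1)[OF \<open>j \<in> S\<close>] by (simp add: power_add power_mult_distrib power_mult[symmetric] mult_ac)
    qed
    also have "(\<Sum>j\<in>S. poly (q j) x * f x ^ j) = (\<Sum>j\<le>D. poly (q j) x * f x ^ j)"
      by (rule sum.mono_neutral_left) (auto simp: S_def)
    finally show ?case using elim by simp
  qed
  moreover have "\<not> ?this"
    by (rule monomial_sum_not_eventually_zero[OF _ _ _ _ h small])
      (use nz er(2) in \<open>auto simp: S_def intro!: tendsto_intros\<close>)
  ultimately show False by contradiction
qed


section \<open>From a formal to a real algebraic relation\<close>

definition real_fps_of_rat :: "rat fps \<Rightarrow> real fps" where
  "real_fps_of_rat G = Abs_fps (\<lambda>n. of_rat (G $ n))"

lemma real_fps_of_rat_nth [simp]: "real_fps_of_rat G $ n = of_rat (G $ n)"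
  by (simp add: real_fps_of_rat_def)

lemma real_fps_of_rat_0 [simp]: "real_fps_of_rat 0 = 0"
  by (simp add: fps_eq_iff)

lemma real_fps_of_rat_add: "real_fps_of_rat (G + H) = real_fps_of_rat G + real_fps_of_rat H"
  by (simp add: fps_eq_iff of_rat_add)

lemma real_fps_of_rat_mult: "real_fps_of_rat (G * H) = real_fps_of_rat G * real_fps_of_rat H"
  by (simp add: fps_eq_iff fps_mult_nth of_rat_sum of_rat_mult)

lemma real_fps_of_rat_sum: "real_fps_of_rat (\<Sum>i\<in>I. G i) = (\<Sum>i\<in>I. real_fps_of_rat (G i))"
  by (induction I rule: infinite_finite_induct)
    (auto simp: fps_eq_iff real_fps_of_rat_add[unfolded fps_eq_iff] of_rat_add)

lemma real_fps_of_rat_power: "real_fps_of_rat (G ^ n) = real_fps_of_rat G ^ n"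
proof (induction n)
  case 0
  show ?case by (simp add: fps_eq_iff fps_one_nth)
qed (simp add: real_fps_of_rat_mult)

lemma real_fps_of_rat_fps_of_poly:
  "real_fps_of_rat (fps_of_poly p) = fps_of_poly (map_poly of_rat p)"
  by (simp add: fps_eq_iff coeff_map_poly)

lemma eval_fps_sum:
  fixes G :: "'b \<Rightarrow> 'a::{banach, real_normed_div_algebra} fps"
  assumes "finite I" "\<forall>i\<in>I. norm x < fps_conv_radius (G i)"
  shows "eval_fps (\<Sum>i\<in>I. G i) x = (\<Sum>i\<in>I. eval_fps (G i) x)
    \<and> norm x < fps_conv_radius (\<Sum>i\<in>I. G i)"
  using assms
proof (induction I rule: finite_induct)
  case (insert i I)
  hence "norm x < fps_conv_radius (G i)" "norm x < fps_conv_radius (\<Sum>i\<in>I. G i)" by auto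
  moreover from this have "norm x < fps_conv_radius (G i + (\<Sum>i\<in>I. G i))"
    using less_le_trans[OF _ fps_conv_radius_add[of "G i" "\<Sum>i\<in>I. G i"]] by simp
  ultimately show ?case using insert by (simp add: eval_fps_add)
qed simp

lemma algebraic_over_rat_z_imp_real_relation:
  fixes F :: "rat fps"
  assumes "algebraic_over_rat_z F"
    and summ: "\<And>x. 0 < x \<Longrightarrow> x < 1 \<Longrightarrow> summable (\<lambda>n. real_of_rat (F $ n) * x ^ n)"
  obtains q :: "nat \<Rightarrow> real poly" and D where "\<exists>j\<le>D. q j \<noteq> 0"
    "\<forall>x. 0 < x \<longrightarrow> x < 1 \<longrightarrow> (\<Sum>j\<le>D. poly (q j) x * (\<Sum>n. real_of_rat (F $ n) * x ^ n) ^ j) = 0"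
proof -
  obtain P :: "rat poly poly" where P: "P \<noteq> 0" "poly (map_poly fps_of_poly P) F = 0"
    using assms(1) unfolding algebraic_over_rat_z_def by blast
  define D where "D = degree P"
  define q where "q j = map_poly (of_rat :: rat \<Rightarrow> real) (coeff P j)" for j
  define Fr where "Fr = real_fps_of_rat F"
  have "degree (map_poly fps_of_poly P) = D"
    unfolding D_def by (rule degree_map_poly) (simp add: fps_of_poly_eq_iff[of _ 0, simplified])
  hence "poly (map_poly fps_of_poly P) F = (\<Sum>j\<le>D. fps_of_poly (coeff P j) * F ^ j)"
    by (simp add: poly_altdef coeff_map_poly)
  hence "real_fps_of_rat (\<Sum>j\<le>D. fps_of_poly (coeff P j) * F ^ j) = 0" using P(2) by simp
  hence zero: "(\<Sum>j\<le>D. fps_of_poly (q j) * Fr ^ j) = 0"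
    by (simp add: real_fps_of_rat_sum real_fps_of_rat_mult real_fps_of_rat_power
        real_fps_of_rat_fps_of_poly q_def Fr_def)
  have "q D \<noteq> 0" using P(1) by (simp add: q_def D_def map_poly_eq_0_iff)
  moreover have "(\<Sum>j\<le>D. poly (q j) x * eval_fps Fr x ^ j) = 0" if x: "0 < x" "x < 1" for x
  proof -
    have "ereal (norm ((1 + x) / 2)) \<le> fps_conv_radius Fr"
      unfolding fps_conv_radius_def Fr_def
      by (rule conv_radius_geI) (use summ[of "(1 + x) / 2"] x in simp)
    moreover have "ereal (norm x) < ereal (norm ((1 + x) / 2))" using x by simp
    ultimately have rad: "norm x < fps_conv_radius Fr" by (rule less_le_trans[rotated])
    hence rad_j: "norm x < fps_conv_radius (fps_of_poly (q j) * Fr ^ j)" for j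
      using fps_conv_radius_mult[of "fps_of_poly (q j)" "Fr ^ j"] fps_conv_radius_power[of Fr j]
      by (simp add: less_le_trans)
    have "0 = eval_fps (\<Sum>j\<le>D. fps_of_poly (q j) * Fr ^ j) x" using zero by simp
    also have "\<dots> = (\<Sum>j\<le>D. eval_fps (fps_of_poly (q j) * Fr ^ j) x)"
      using eval_fps_sum[of "{..D}" x "\<lambda>j. fps_of_poly (q j) * Fr ^ j"] rad_j by simp
    also have "\<dots> = (\<Sum>j\<le>D. poly (q j) x * eval_fps Fr x ^ j)"
      using rad less_le_trans[OF rad fps_conv_radius_power]
      by (simp add: eval_fps_mult eval_fps_power)
    finally show ?thesis by simp
  qed
  moreover have "eval_fps Fr x = (\<Sum>n. real_of_rat (F $ n) * x ^ n)" for x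
    by (simp add: eval_fps_def Fr_def)
  ultimately show ?thesis using that[of D q] by auto
qed


section \<open>Growth of the generating function at \<open>1\<close>\<close>

definition Av_series :: "nat list \<Rightarrow> real \<Rightarrow> real" where
  "Av_series \<mu> x = (\<Sum>n. real (card (Av n \<mu>)) * x ^ n)"

definition log_power_bound :: "nat \<Rightarrow> real \<Rightarrow> real" where
  "log_power_bound A t = (\<Sum>s\<le>A. (5 * (1 + ln (1 / t)) / t) ^ s)"

context
  fixes \<mu> :: "nat list"
  assumes mu: "is_strict_partition \<mu>" and l2: "length \<mu> \<ge> 2" and m01: "\<mu>!0 = \<mu>!1 + 1"
begin

lemma Av_partial_sum_le:
  fixes x :: real
  assumes x: "0 < x" "x < 1"
  shows "(\<Sum>n\<le>N. real (card (Av n \<mu>)) * x ^ n) \<le> log_power_bound (max_distinct_parts \<mu>) (1 - x)"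
proof -
  have "(\<Sum>n\<le>N. real (card (Av n \<mu>)) * x ^ n) = (\<Sum>\<alpha>\<in>Av_upto \<mu> N. x ^ sum_list \<alpha>)"
    by (simp add: sum_Av_upto_eq_partial_sum)
  also have "\<dots> \<le> (\<Sum>s\<le>max_distinct_parts \<mu>. (\<Sum>(v, r)\<in>{1..N}\<times>{1..N}. x ^ (v * r)) ^ s)"
    using sum_Av_upto_le[OF mu l2 m01] x by simp
  also have "\<dots> \<le> log_power_bound (max_distinct_parts \<mu>) (1 - x)"
    unfolding log_power_bound_def
  proof (rule sum_mono)
    fix s
    have "(\<Sum>(v, r)\<in>{1..N}\<times>{1..N}. x ^ (v * r)) \<le> 5 * (1 + ln (1 / (1 - x))) / (1 - x)"
      using sum_one_minus_power_mult_le[of "1 - x" N] x by simp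
    moreover have "0 \<le> (\<Sum>(v, r)\<in>{1..N}\<times>{1..N}. x ^ (v * r))" using x by (intro sum_nonneg) auto
    ultimately show "(\<Sum>(v, r)\<in>{1..N}\<times>{1..N}. x ^ (v * r)) ^ s
        \<le> (5 * (1 + ln (1 / (1 - x))) / (1 - x)) ^ s"
      by (intro power_mono) auto
  qed
  finally show ?thesis .
qed

lemma summable_Av_series:
  fixes x :: real
  assumes "0 < x" "x < 1"
  shows "summable (\<lambda>n. real (card (Av n \<mu>)) * x ^ n)"
  by (rule bounded_imp_summable[where B = "log_power_bound (max_distinct_parts \<mu>) (1 - x)"])
    (use assms Av_partial_sum_le in auto)

lemma Av_partial_sum_le_series:
  fixes x :: real
  assumes "0 < x" "x < 1"
  shows "(\<Sum>n\<le>N. real (card (Av n \<mu>)) * x ^ n) \<le> Av_series \<mu> x"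
  unfolding Av_series_def by (rule sum_le_suminf[OF summable_Av_series[OF assms]]) (use assms in auto)

lemma Av_series_nonneg:
  fixes x :: real
  assumes "0 < x" "x < 1"
  shows "0 \<le> Av_series \<mu> x"
  unfolding Av_series_def by (rule suminf_nonneg[OF summable_Av_series[OF assms]]) (use assms in auto)

lemma Av_series_le:
  fixes x :: real
  assumes x: "0 < x" "x < 1"
  shows "Av_series \<mu> x \<le> log_power_bound (max_distinct_parts \<mu>) (1 - x)"
  unfolding Av_series_def
proof (rule suminf_le_const[OF summable_Av_series[OF x]])
  fix n
  have "(\<Sum>k<n. real (card (Av k \<mu>)) * x ^ k) \<le> (\<Sum>k\<le>n. real (card (Av k \<mu>)) * x ^ k)"
    by (rule sum_mono2) (use x in auto)
  also have "\<dots> \<le> log_power_bound (max_distinct_parts \<mu>) (1 - x)" by (rule Av_partial_sum_le[OF x])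
  finally show "(\<Sum>k<n. real (card (Av k \<mu>)) * x ^ k) \<le> log_power_bound (max_distinct_parts \<mu>) (1 - x)" .
qed

lemma Av_series_scaled_lower:
  obtains c C where "0 < c" "\<forall>\<^sub>F x in at_left 1.
    c * (ln (1 / (4 * (1 - x))) - C) \<le> Av_series \<mu> x * (1 - x) ^ max_distinct_parts \<mu>"
proof -
  obtain M Ws where Ws: "\<forall>w\<in>set Ws. 1 \<le> w \<and> w < M"
    and len: "length Ws + 1 = max_distinct_parts \<mu>"
    and family: "\<And>(x::real) K R. 0 \<le> x \<Longrightarrow> \<exists>N.
       (\<Sum>(a, r)\<in>Sigma {M<..K} (\<lambda>a. {1..R a}). x ^ (a * r)) *
         prod_list (map (\<lambda>w. \<Sum>r\<in>{1..R w}. x ^ (w * r)) Ws) \<le> (\<Sum>\<alpha>\<in>Av_upto \<mu> N. x ^ sum_list \<alpha>)"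
    by (rule sum_Av_upto_ge_family[OF mu l2 m01]) blast
  define c where "c = prod_list (map (\<lambda>w. 1 / (8 * real w)) Ws) / 8"
  have "0 < c" unfolding c_def using Ws by (induction Ws) auto
  define t0 where "t0 = 1 / (4 * (real M + 1))"
  have t0: "0 < t0" "t0 < 1" by (auto simp: t0_def field_simps)
  hence "\<forall>\<^sub>F x in at_left 1. x \<in> {1 - t0<..<1::real}"
    by (intro eventually_at_left_real) simp
  hence "\<forall>\<^sub>F x in at_left 1.
    c * (ln (1 / (4 * (1 - x))) - harm M) \<le> Av_series \<mu> x * (1 - x) ^ max_distinct_parts \<mu>"
  proof eventually_elim
    case (elim x)
    define t where "t = 1 - x"
    have x: "0 < x" "x < 1" "x = 1 - t" using elim t0 by (auto simp: t_def)
    have t: "0 < t" "4 * (real M + 1) * t \<le> 1"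
      using elim by (auto simp: t_def t0_def field_simps)
    define K where "K = nat \<lfloor>1 / (4 * t)\<rfloor>"
    define R where "R a = nat \<lfloor>1 / (2 * real a * t)\<rfloor>" for a :: nat
    obtain N where N: "(\<Sum>(a, r)\<in>Sigma {M<..K} (\<lambda>a. {1..R a}). x ^ (a * r)) *
         prod_list (map (\<lambda>w. \<Sum>r\<in>{1..R w}. x ^ (w * r)) Ws) \<le> (\<Sum>\<alpha>\<in>Av_upto \<mu> N. x ^ sum_list \<alpha>)"
      using family[of x K R] x by auto
    have "c * (ln (1 / (4 * t)) - harm M) \<le> (\<Sum>(a, r)\<in>Sigma {M<..K} (\<lambda>a. {1..R a}). x ^ (a * r)) *
        prod_list (map (\<lambda>w. \<Sum>r\<in>{1..R w}. x ^ (w * r)) Ws) * t ^ max_distinct_parts \<mu>"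
      unfolding c_def K_def R_def x(3) len[symmetric] by (rule sum_Sigma_mult_prod_list_ge[OF t Ws])
    also have "\<dots> \<le> Av_series \<mu> x * t ^ max_distinct_parts \<mu>"
      using N Av_partial_sum_le_series[OF x(1,2), of N] t
      by (intro mult_right_mono) (simp_all add: sum_Av_upto_eq_partial_sum)
    finally show ?case by (simp add: t_def)
  qed
  thus ?thesis using that \<open>0 < c\<close> by blast
qed

lemma Av_series_scaled_at_top:
  "filterlim (\<lambda>x. Av_series \<mu> x * (1 - x) ^ max_distinct_parts \<mu>) at_top (at_left 1)"
proof -
  obtain c C where c: "0 < c" and lower: "\<forall>\<^sub>F x in at_left 1.
    c * (ln (1 / (4 * (1 - x))) - C) \<le> Av_series \<mu> x * (1 - x) ^ max_distinct_parts \<mu>"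
    by (rule Av_series_scaled_lower)
  have "filterlim (\<lambda>x::real. ln (1 / (4 * (1 - x))) - C) at_top (at_left 1)" by real_asymp
  hence "filterlim (\<lambda>x. c * (ln (1 / (4 * (1 - x))) - C)) at_top (at_left 1)"
    by (rule filterlim_tendsto_pos_mult_at_top[OF tendsto_const c])
  thus ?thesis by (rule filterlim_at_top_mono[OF _ lower])
qed

lemma Av_series_scaled_small:
  "((\<lambda>x. (1 - x) * (Av_series \<mu> x * (1 - x) ^ max_distinct_parts \<mu>) ^ n) \<longlongrightarrow> 0) (at_left 1)"
proof -
  define A where "A = max_distinct_parts \<mu>"
  define C where "C = (real (A + 1) * 5 ^ A) ^ n"
  have "\<forall>\<^sub>F x in at_left 1. x \<in> {0<..<1::real}" by (rule eventually_at_left_real) simp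
  hence "\<forall>\<^sub>F x in at_left 1. 0 \<le> (1 - x) * (Av_series \<mu> x * (1 - x) ^ A) ^ n \<and>
      (1 - x) * (Av_series \<mu> x * (1 - x) ^ A) ^ n \<le> C * ((1 - x) * (1 + ln (1 / (1 - x))) ^ (A * n))"
  proof eventually_elim
    case (elim x)
    hence x: "0 < x" "x < 1" by auto
    define L where "L = 1 + ln (1 / (1 - x))"
    have L: "1 \<le> L" using x by (simp add: L_def)
    have f0: "0 \<le> Av_series \<mu> x * (1 - x) ^ A" using Av_series_nonneg[OF x] x by simp
    have "Av_series \<mu> x * (1 - x) ^ A \<le> log_power_bound A (1 - x) * (1 - x) ^ A"
      using Av_series_le[OF x] x by (intro mult_right_mono) (auto simp: A_def)
    also have "\<dots> \<le> real (A + 1) * (5 * L) ^ A"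
      unfolding log_power_bound_def L_def using x L
      by (intro sum_power_div_mult_power_le) (auto simp: L_def)
    finally have "(Av_series \<mu> x * (1 - x) ^ A) ^ n \<le> (real (A + 1) * (5 * L) ^ A) ^ n"
      using f0 by (intro power_mono)
    also have "\<dots> = C * L ^ (A * n)" by (simp add: C_def power_mult_distrib power_mult)
    finally show ?case using f0 x by (auto simp: L_def mult_left_mono)
  qed
  hence lb: "\<forall>\<^sub>F x in at_left 1. 0 \<le> (1 - x) * (Av_series \<mu> x * (1 - x) ^ A) ^ n"
    and ub: "\<forall>\<^sub>F x in at_left 1.
      (1 - x) * (Av_series \<mu> x * (1 - x) ^ A) ^ n \<le> C * ((1 - x) * (1 + ln (1 / (1 - x))) ^ (A * n))"
    by (simp_all only: eventually_conj_iff)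
  have "((\<lambda>x. C * ((1 - x) * (1 + ln (1 / (1 - x))) ^ (A * n))) \<longlongrightarrow> C * 0) (at_left 1)"
    by (intro tendsto_mult tendsto_const tendsto_one_minus_mult_log_power)
  hence "((\<lambda>x. (1 - x) * (Av_series \<mu> x * (1 - x) ^ A) ^ n) \<longlongrightarrow> 0) (at_left 1)"
    using tendsto_sandwich[OF lb ub tendsto_const] by simp
  thus ?thesis by (simp add: A_def)
qed

end

theorem mainTheorem20:
  fixes \<mu> :: "nat list"
  assumes "is_strict_partition \<mu>"
    and "length \<mu> \<ge> 2"
    and "\<mu> ! 0 = \<mu> ! 1 + 1"
  shows "\<not> algebraic_over_rat_z (Av_gf \<mu>)"
proof
  assume alg: "algebraic_over_rat_z (Av_gf \<mu>)"
  have coeff: "real_of_rat (Av_gf \<mu> $ n) = real (card (Av n \<mu>))" for n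
    by (simp add: Av_gf_def of_rat_of_nat_eq)
  have summ: "\<And>x. 0 < x \<Longrightarrow> x < 1 \<Longrightarrow> summable (\<lambda>n. real_of_rat (Av_gf \<mu> $ n) * x ^ n)"
    using summable_Av_series[OF assms] by (simp add: coeff)
  obtain q :: "nat \<Rightarrow> real poly" and D where q: "\<exists>j\<le>D. q j \<noteq> 0" and rel:
    "\<forall>x. 0 < x \<longrightarrow> x < 1 \<longrightarrow> (\<Sum>j\<le>D. poly (q j) x * (\<Sum>n. real_of_rat (Av_gf \<mu> $ n) * x ^ n) ^ j) = 0"
    by (rule algebraic_over_rat_z_imp_real_relation[OF alg summ]) blast
  have "\<forall>\<^sub>F x in at_left 1. x \<in> {0<..<1::real}" by (rule eventually_at_left_real) simp
  hence "\<forall>\<^sub>F x in at_left 1. (\<Sum>j\<le>D. poly (q j) x * Av_series \<mu> x ^ j) = 0"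
    by eventually_elim (use rel in \<open>simp add: Av_series_def coeff\<close>)
  thus False
    using poly_relation_not_eventually_zero[OF q Av_series_scaled_at_top[OF assms]
        Av_series_scaled_small[OF assms]] by contradiction
qed

end
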